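(* Let $(\tau,R)$ be a generic $M$-layer model and $\psi=\Psi(\tau,R)$. Then $U_\psi\subset\mathbb{R}^{M+1}$ is a convex open set containing $\tau$, and $\mathcal{R}_\psi\subset(-1,1)^{M+1}$ is an open set containing $R$.
   Context: An $M$-layer model ($M\ge1$) is $(\tau,R)$ with $\tau\in\mathbb{R}^{M+1}_{>0}$, $R\in(-1,1)^{M+1}$. $\mathfrak{L}_M\subset\mathbb{Z}^{M+1}_{\geq0}$: all $k$ with $k_0=1$ and $k_n>0\Rightarrow k_{n-1}>0$ ($1\le n\le M$); $\mathfrak{L}^\tau_M=\{k\in\mathfrak{L}_M:\langle k,\tau\rangle\le\langle\mathbb{1},\tau\rangle\}$. Amplitude polynomial: $\mathbb{1}=(1,\ldots,1)$; inequalities and $\min$ entrywise; $x^k=\prod_n x_n^{k_n}$, $\binom{k}{b}=\prod_n\binom{k_n}{b_n}$; $\tilde k=(k_1,\ldots,k_M,0)$, $u=\min\{\mathbb{1},\tilde k\}$, $V(k)=\{b:u\le b\le\min\{k,\tilde k\}\}$, $a(x,k)=\sum_{b\in V(k)}\binom{k}{b}\binom{\tilde k-u}{b-u}(-x)^{\tilde k-b}x^{k-b}\prod_n(1-x_n^2)^{b_n}$. Data: $D^{(\tau,R)}(t)=\sum_{k\in\mathfrak{L}^\tau_M}a(R,k)\delta(t-\langle k,\tau\rangle)$, in normal form $\sum_{n=1}^d\alpha_n\delta(t-\sigma_n)$ ($\alpha_n\ne0$, $\sigma_1<\cdots<\sigma_d$). With $S=\{\sigma_n\}$, the enumeration function $\Psi(\tau,R):\mathfrak{L}^\tau_M\to\{0,\ldots,d\}$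 sends $k$ to $0$ if $\langle k,\tau\rangle\notin S$ and to $1+\#\{s\in S:s<\langle k,\tau\rangle\}$ otherwise. $(\tau,R)$ is generic if $\Psi(\tau,R)$ is injective and never $0$. For $\psi=\Psi(\tau,R)$ with $(\tau,R)$ generic: $\mathcal{R}_\psi=\{R'\in(-1,1)^{M+1}: a(R',k)\ne0\ \forall k\in\mathfrak{L}^\tau_M\}$, and $U_\psi=\{\tau'\in\mathbb{R}^{M+1}_{>0}:\Psi(\tau',R')=\psi\text{ for all }R'\in\mathcal{R}_\psi\}$ (equality of functions, including equality of domains $\mathfrak{L}^{\tau'}_M=\mathfrak{L}^\tau_M$). *)

theory Defs
  imports "HOL-Analysis.Analysis"
begin

text \<open>Vectors in R^(M+1) (indices 0..M) are represented as functions nat => real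
  that vanish for indices > M.  Multi-indices k in Z_{>=0}^(M+1) likewise as nat => nat.\<close>

definition Rsp :: "nat \<Rightarrow> (nat \<Rightarrow> real) set" where
  "Rsp M = {x. \<forall>n>M. x n = 0}"

definition Nsp :: "nat \<Rightarrow> (nat \<Rightarrow> nat) set" where
  "Nsp M = {k. \<forall>n>M. k n = 0}"

definition pos_vecs :: "nat \<Rightarrow> (nat \<Rightarrow> real) set" where
  "pos_vecs M = {x \<in> Rsp M. \<forall>n\<le>M. x n > 0}"

definition refl_vecs :: "nat \<Rightarrow> (nat \<Rightarrow> real) set" where
  "refl_vecs M = {x \<in> Rsp M. \<forall>n\<le>M. -1 < x n \<and> x n < 1}"

definition ipr :: "nat \<Rightarrow> (nat \<Rightarrow> nat) \<Rightarrow> (nat \<Rightarrow> real) \<Rightarrow> real" where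
  "ipr M k \<tau> = (\<Sum>n\<le>M. real (k n) * \<tau> n)"

definition LM :: "nat \<Rightarrow> (nat \<Rightarrow> nat) set" where
  "LM M = {k \<in> Nsp M. k 0 = 1 \<and> (\<forall>n\<in>{1..M}. k n > 0 \<longrightarrow> k (n - 1) > 0)}"

definition LMtau :: "nat \<Rightarrow> (nat \<Rightarrow> real) \<Rightarrow> (nat \<Rightarrow> nat) set" where
  "LMtau M \<tau> = {k \<in> LM M. ipr M k \<tau> \<le> ipr M (\<lambda>n. if n \<le> M then 1 else 0) \<tau>}"

definition ktil :: "nat \<Rightarrow> (nat \<Rightarrow> nat) \<Rightarrow> nat \<Rightarrow> nat" where
  "ktil M k = (\<lambda>n. if n < M then k (n + 1) else 0)"

definition uvec :: "nat \<Rightarrow> (nat \<Rightarrow> nat) \<Rightarrow> nat \<Rightarrow> nat" where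
  "uvec M k = (\<lambda>n. if n \<le> M then min 1 (ktil M k n) else 0)"

definition Vset :: "nat \<Rightarrow> (nat \<Rightarrow> nat) \<Rightarrow> (nat \<Rightarrow> nat) set" where
  "Vset M k = {b \<in> Nsp M. \<forall>n\<le>M. uvec M k n \<le> b n \<and> b n \<le> min (k n) (ktil M k n)}"

definition ampl :: "nat \<Rightarrow> (nat \<Rightarrow> real) \<Rightarrow> (nat \<Rightarrow> nat) \<Rightarrow> real" where
  "ampl M x k = (\<Sum>b\<in>Vset M k. \<Prod>n\<le>M.
      real (k n choose b n) * real ((ktil M k n - uvec M k n) choose (b n - uvec M k n))
      * (- x n) ^ (ktil M k n - b n) * x n ^ (k n - b n) * (1 - (x n)\<^sup>2) ^ (b n))"

definition coef :: "nat \<Rightarrow> (nat \<Rightarrow> real) \<Rightarrow> (nat \<Rightarrow> real) \<Rightarrow> real \<Rightarrow> real" where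
  "coef M \<tau> R t = (\<Sum>k\<in>{k \<in> LMtau M \<tau>. ipr M k \<tau> = t}. ampl M R k)"

definition supp_times :: "nat \<Rightarrow> (nat \<Rightarrow> real) \<Rightarrow> (nat \<Rightarrow> real) \<Rightarrow> real set" where
  "supp_times M \<tau> R = {t \<in> (\<lambda>k. ipr M k \<tau>) ` LMtau M \<tau>. coef M \<tau> R t \<noteq> 0}"

text \<open>Enumeration function Psi(tau,R); its domain is LMtau M tau.\<close>
definition Psi :: "nat \<Rightarrow> (nat \<Rightarrow> real) \<Rightarrow> (nat \<Rightarrow> real) \<Rightarrow> (nat \<Rightarrow> nat) \<Rightarrow> nat" where
  "Psi M \<tau> R k = (if ipr M k \<tau> \<notin> supp_times M \<tau> R then 0
      else 1 + card {s \<in> supp_times M \<tau> R. s < ipr M k \<tau>})"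

definition generic :: "nat \<Rightarrow> (nat \<Rightarrow> real) \<Rightarrow> (nat \<Rightarrow> real) \<Rightarrow> bool" where
  "generic M \<tau> R \<longleftrightarrow> \<tau> \<in> pos_vecs M \<and> R \<in> refl_vecs M \<and>
     inj_on (Psi M \<tau> R) (LMtau M \<tau>) \<and> (\<forall>k\<in>LMtau M \<tau>. Psi M \<tau> R k \<noteq> 0)"

definition Rpsi :: "nat \<Rightarrow> (nat \<Rightarrow> nat) set \<Rightarrow> (nat \<Rightarrow> real) set" where
  "Rpsi M L = {R' \<in> refl_vecs M. \<forall>k\<in>L. ampl M R' k \<noteq> 0}"

text \<open>U_psi for psi with domain L: equality of functions including domains.\<close>
definition Upsi :: "nat \<Rightarrow> (nat \<Rightarrow> nat) set \<Rightarrow> ((nat \<Rightarrow> nat) \<Rightarrow> nat) \<Rightarrow> (nat \<Rightarrow> real) set" where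
  "Upsi M L \<psi> = {\<tau>' \<in> pos_vecs M. \<forall>R'\<in>Rpsi M L.
      LMtau M \<tau>' = L \<and> (\<forall>k\<in>L. Psi M \<tau>' R' k = \<psi> k)}"

definition convex_coords :: "(nat \<Rightarrow> real) set \<Rightarrow> bool" where
  "convex_coords S \<longleftrightarrow> (\<forall>x\<in>S. \<forall>y\<in>S. \<forall>t::real. 0 \<le> t \<and> t \<le> 1 \<longrightarrow>
      (\<lambda>n. (1 - t) * x n + t * y n) \<in> S)"

end

theory Submission
  imports Defs
begin

text \<open>
  For a generic model the arrival times \<open>\<langle>k,\<tau>\<rangle>\<close>, \<open>k \<in> L = \<L>\<^sup>\<tau>\<^sub>M\<close>, are pairwise
  distinct and all amplitudes \<open>a(R,k)\<close> are nonzero, so \<open>R \<in> \<R>\<^sub>\<psi>\<close> and \<open>\<psi>(k)\<close> is simply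
  one plus the rank of \<open>\<langle>k,\<tau>\<rangle>\<close> among the arrival times.  The key step is an explicit
  description of \<open>U\<^sub>\<psi>\<close>: a positive vector \<open>x\<close> lies in \<open>U\<^sub>\<psi>\<close> iff
    (i)  \<open>x\<close> keeps the strict order of the times \<open>\<langle>k,\<tau>\<rangle>\<close>, \<open>k \<in> L\<close>, and
    (ii) every admissible \<open>k \<notin> L\<close> arrives strictly after \<open>\<langle>\<one>,x\<rangle>\<close>.
  Both conditions are strict linear inequalities in \<open>x\<close>, which gives convexity at once.
  Condition (i) involves finitely many inequalities, hence is open; condition (ii)
  involves infinitely many, but near a fixed \<open>x\<^sub>0\<close> only finitely many multi-indices can
  come close to the threshold, so it is open as well.  Openness of \<open>\<R>\<^sub>\<psi>\<close> is continuity
  of the finitely many amplitude polynomials.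
\<close>

section \<open>Finiteness of sublevel sets\<close>

lemma finite_bounded_indices: "finite {k \<in> Nsp M. \<forall>n\<le>M. k n \<le> B}"
proof (rule finite_subset)
  show "{k \<in> Nsp M. \<forall>n\<le>M. k n \<le> B}
      \<subseteq> (\<lambda>f n. if n \<le> M then f n else 0) ` PiE {..M} (\<lambda>_. {..B})"
  proof
    fix k assume k: "k \<in> {k \<in> Nsp M. \<forall>n\<le>M. k n \<le> B}"
    have "k = (\<lambda>n. if n \<le> M then restrict k {..M} n else 0)"
      using k by (auto simp: Nsp_def fun_eq_iff)
    moreover have "restrict k {..M} \<in> PiE {..M} (\<lambda>_. {..B})" using k by auto
    ultimately show "k \<in> (\<lambda>f n. if n \<le> M then f n else 0) ` PiE {..M} (\<lambda>_. {..B})" by blast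
  qed
qed (intro finite_imageI finite_PiE; simp)

lemma ipr_ge_summand:
  assumes "x \<in> pos_vecs M" "n \<le> M"
  shows "real (k n) * x n \<le> ipr M k x"
  unfolding ipr_def using assms
  by (intro member_le_sum) (auto simp: pos_vecs_def less_imp_le)

definition min_coord :: "nat \<Rightarrow> (nat \<Rightarrow> real) \<Rightarrow> real" where
  "min_coord M x = Min (x ` {..M})"

lemma min_coord_le: "n \<le> M \<Longrightarrow> min_coord M x \<le> x n"
  unfolding min_coord_def by (intro Min_le) auto

lemma min_coord_pos: "x \<in> pos_vecs M \<Longrightarrow> 0 < min_coord M x"
proof -
  assume x: "x \<in> pos_vecs M"
  have "min_coord M x \<in> x ` {..M}" unfolding min_coord_def by (intro Min_in) auto
  then show ?thesis using x by (auto simp: pos_vecs_def)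
qed

text \<open>For positive \<open>x\<close> only finitely many multi-indices satisfy \<open>\<langle>k,x\<rangle> \<le> C\<close>:
  each entry is at most \<open>C / min\<^sub>n x\<^sub>n\<close>.\<close>
lemma finite_sublevel:
  assumes x: "x \<in> pos_vecs M"
  shows "finite {k \<in> Nsp M. ipr M k x \<le> C}"
proof -
  define d where "d = min_coord M x"
  have d: "0 < d" unfolding d_def by (rule min_coord_pos[OF x])
  define B where "B = nat \<lceil>C / d\<rceil>"
  have "{k \<in> Nsp M. ipr M k x \<le> C} \<subseteq> {k \<in> Nsp M. \<forall>n\<le>M. k n \<le> B}"
  proof safe
    fix k n assume k: "k \<in> Nsp M" "ipr M k x \<le> C" and n: "n \<le> M"
    have "real (k n) * d \<le> real (k n) * x n"
      unfolding d_def using min_coord_le[OF n] by (intro mult_left_mono) auto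
    also have "\<dots> \<le> C" using ipr_ge_summand[OF x n, of k] k(2) by linarith
    finally have "real (k n) \<le> C / d" using d by (simp add: field_simps)
    then show "k n \<le> B" unfolding B_def by linarith
  qed
  then show ?thesis using finite_bounded_indices finite_subset by blast
qed

definition ones :: "nat \<Rightarrow> nat \<Rightarrow> nat" where
  "ones M = (\<lambda>n. if n \<le> M then 1 else 0)"

lemma LMtau_iff: "k \<in> LMtau M x \<longleftrightarrow> k \<in> LM M \<and> ipr M k x \<le> ipr M (ones M) x"
  by (simp add: LMtau_def ones_def)

lemma ones_in_LMtau: "ones M \<in> LMtau M x"
  by (auto simp: ones_def LMtau_def LM_def Nsp_def)

lemma finite_LMtau: "x \<in> pos_vecs M \<Longrightarrow> finite (LMtau M x)"
  by (rule finite_subset[OF _ finite_sublevel[of x M "ipr M (ones M) x"]])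
     (auto simp: LMtau_iff LM_def)

section \<open>Order properties of the enumeration function\<close>

lemma Psi_equal_times: "ipr M k x = ipr M k' x \<Longrightarrow> Psi M x R k = Psi M x R k'"
  by (simp add: Psi_def)

lemma Psi_strict_mono:
  assumes "finite (LMtau M x)" "Psi M x R k \<noteq> 0" "Psi M x R k' \<noteq> 0"
    and "ipr M k x < ipr M k' x"
  shows "Psi M x R k < Psi M x R k'"
proof -
  let ?S = "supp_times M x R"
  have fin: "finite ?S" using assms(1) unfolding supp_times_def by auto
  have in_S: "ipr M k x \<in> ?S" "ipr M k' x \<in> ?S"
    using assms(2,3) by (auto simp: Psi_def split: if_splits)
  have "{s \<in> ?S. s < ipr M k x} \<subset> {s \<in> ?S. s < ipr M k' x}"
    using in_S assms(4) by auto
  then have "card {s \<in> ?S. s < ipr M k x} < card {s \<in> ?S. s < ipr M k' x}"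
    using fin by (intro psubset_card_mono) auto
  then show ?thesis using in_S by (simp add: Psi_def)
qed

lemma Psi_reflects_order:
  assumes "finite (LMtau M x)" "Psi M x R k \<noteq> 0" "Psi M x R k' \<noteq> 0"
    and "Psi M x R k < Psi M x R k'"
  shows "ipr M k x < ipr M k' x"
proof (rule ccontr)
  assume "\<not> ipr M k x < ipr M k' x"
  then consider "ipr M k' x = ipr M k x" | "ipr M k' x < ipr M k x" by linarith
  then show False
    using assms Psi_equal_times[of M k' x k R] Psi_strict_mono[of M x R k' k]
    by cases auto
qed

lemma coef_distinct_times:
  assumes "inj_on (\<lambda>k. ipr M k x) (LMtau M x)" "j \<in> LMtau M x"
  shows "coef M x R (ipr M j x) = ampl M R j"
proof -
  have "{k \<in> LMtau M x. ipr M k x = ipr M j x} = {j}"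
    using assms by (auto dest: inj_onD)
  then show ?thesis by (simp add: coef_def)
qed

lemma Psi_is_rank:
  assumes inj: "inj_on (\<lambda>k. ipr M k x) (LMtau M x)"
    and nz: "\<forall>k\<in>LMtau M x. ampl M R k \<noteq> 0" and k: "k \<in> LMtau M x"
  shows "Psi M x R k = 1 + card {j \<in> LMtau M x. ipr M j x < ipr M k x}"
proof -
  have S: "supp_times M x R = (\<lambda>k. ipr M k x) ` LMtau M x"
    using coef_distinct_times[OF inj] nz by (auto simp: supp_times_def)
  have "{s \<in> supp_times M x R. s < ipr M k x}
      = (\<lambda>k. ipr M k x) ` {j \<in> LMtau M x. ipr M j x < ipr M k x}"
    unfolding S by auto
  moreover have "card ((\<lambda>k. ipr M k x) ` {j \<in> LMtau M x. ipr M j x < ipr M k x})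
      = card {j \<in> LMtau M x. ipr M j x < ipr M k x}"
    by (rule card_image) (rule inj_on_subset[OF inj], auto)
  ultimately show ?thesis using k by (simp add: Psi_def S)
qed

lemma generic_distinct_times:
  assumes "generic M \<tau> R"
  shows "inj_on (\<lambda>k. ipr M k \<tau>) (LMtau M \<tau>)"
proof (rule inj_onI)
  fix k k' assume "k \<in> LMtau M \<tau>" "k' \<in> LMtau M \<tau>" "ipr M k \<tau> = ipr M k' \<tau>"
  then show "k = k'"
    using assms Psi_equal_times[of M k \<tau> k' R] by (auto simp: generic_def dest: inj_onD)
qed

lemma generic_in_Rpsi:
  assumes gen: "generic M \<tau> R"
  shows "R \<in> Rpsi M (LMtau M \<tau>)"
proof -
  have "ampl M R k \<noteq> 0" if k: "k \<in> LMtau M \<tau>" for k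
  proof -
    have "ipr M k \<tau> \<in> supp_times M \<tau> R"
      using gen k by (auto simp: generic_def Psi_def split: if_splits)
    then show ?thesis
      using coef_distinct_times[OF generic_distinct_times[OF gen] k, of R]
      by (simp add: supp_times_def)
  qed
  then show ?thesis using gen by (simp add: Rpsi_def generic_def)
qed

section \<open>The characterisation of \<open>U\<^sub>\<psi>\<close>\<close>

definition order_kept :: "nat \<Rightarrow> (nat \<Rightarrow> nat) set \<Rightarrow> (nat \<Rightarrow> real) \<Rightarrow> (nat \<Rightarrow> real) \<Rightarrow> bool" where
  "order_kept M L \<tau> x \<longleftrightarrow>
     (\<forall>k\<in>L. \<forall>k'\<in>L. ipr M k \<tau> < ipr M k' \<tau> \<longrightarrow> ipr M k x < ipr M k' x)"

definition outside_late :: "nat \<Rightarrow> (nat \<Rightarrow> nat) set \<Rightarrow> (nat \<Rightarrow> real) \<Rightarrow> bool" where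
  "outside_late M L x \<longleftrightarrow> (\<forall>k\<in>LM M - L. ipr M (ones M) x < ipr M k x)"

lemma order_kept_less_iff:
  assumes inj: "inj_on (\<lambda>k. ipr M k \<tau>) L" and ord: "order_kept M L \<tau> x"
    and j: "j \<in> L" and k: "k \<in> L"
  shows "ipr M j x < ipr M k x \<longleftrightarrow> ipr M j \<tau> < ipr M k \<tau>"
proof
  assume lt: "ipr M j x < ipr M k x"
  show "ipr M j \<tau> < ipr M k \<tau>"
  proof (rule ccontr)
    assume "\<not> ipr M j \<tau> < ipr M k \<tau>"
    then consider "ipr M j \<tau> = ipr M k \<tau>" | "ipr M k \<tau> < ipr M j \<tau>" by linarith
    then show False
    proof cases
      case 1
      then show False using lt inj_onD[OF inj _ j k] by simp
    next
      case 2
      then have "ipr M k x < ipr M j x" using ord j k by (simp add: order_kept_def)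
      then show False using lt by simp
    qed
  qed
qed (use ord j k in \<open>auto simp: order_kept_def\<close>)

lemma order_kept_distinct_times:
  assumes inj: "inj_on (\<lambda>k. ipr M k \<tau>) L" and ord: "order_kept M L \<tau> x"
  shows "inj_on (\<lambda>k. ipr M k x) L"
proof (rule inj_onI)
  fix j k assume j: "j \<in> L" and k: "k \<in> L" and eq: "ipr M j x = ipr M k x"
  then have "\<not> ipr M j \<tau> < ipr M k \<tau>" "\<not> ipr M k \<tau> < ipr M j \<tau>"
    using order_kept_less_iff[OF inj ord j k] order_kept_less_iff[OF inj ord k j] by auto
  then show "j = k" using inj_onD[OF inj _ j k] by linarith
qed

text \<open>Under (i) and (ii) the admissible set for \<open>x\<close> is again \<open>L = \<L>\<^sup>\<tau>\<^sub>M\<close>: the threshold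
  \<open>\<one>\<close> is the latest element of \<open>L\<close>, so all of \<open>L\<close> stays below it, and (ii) keeps
  everything else above it.\<close>
lemma LMtau_preserved:
  assumes inj: "inj_on (\<lambda>k. ipr M k \<tau>) (LMtau M \<tau>)"
    and ord: "order_kept M (LMtau M \<tau>) \<tau> x" and late: "outside_late M (LMtau M \<tau>) x"
  shows "LMtau M x = LMtau M \<tau>"
proof (intro set_eqI iffI)
  fix k assume k: "k \<in> LMtau M x"
  show "k \<in> LMtau M \<tau>"
  proof (rule ccontr)
    assume "k \<notin> LMtau M \<tau>"
    then have "ipr M (ones M) x < ipr M k x"
      using late k by (simp add: outside_late_def LMtau_iff)
    then show False using k by (simp add: LMtau_iff)
  qed
next
  fix k assume k: "k \<in> LMtau M \<tau>"
  show "k \<in> LMtau M x"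
  proof (cases "k = ones M")
    case False
    then have "ipr M k \<tau> < ipr M (ones M) \<tau>"
      using k inj_onD[OF inj _ k ones_in_LMtau] by (force simp: LMtau_iff)
    then have "ipr M k x < ipr M (ones M) x"
      using ord k ones_in_LMtau unfolding order_kept_def by blast
    then show ?thesis using k by (simp add: LMtau_iff)
  qed (simp add: ones_in_LMtau)
qed

text \<open>Membership in \<open>U\<^sub>\<psi>\<close> forces (i) and (ii): testing with \<open>R\<close> itself, equal enumerations
  mean equally ordered arrival times, and equal admissible sets give (ii).\<close>
lemma Upsi_imp_conditions:
  assumes tpos: "\<tau> \<in> pos_vecs M" and inj: "inj_on (\<lambda>k. ipr M k \<tau>) (LMtau M \<tau>)"
    and R: "R \<in> Rpsi M (LMtau M \<tau>)" and x: "x \<in> Upsi M (LMtau M \<tau>) (Psi M \<tau> R)"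
  shows "order_kept M (LMtau M \<tau>) \<tau> x \<and> outside_late M (LMtau M \<tau>) x"
proof
  have LL: "LMtau M x = LMtau M \<tau>"
    and same: "\<forall>k\<in>LMtau M \<tau>. Psi M x R k = Psi M \<tau> R k"
    using x R by (auto simp: Upsi_def)
  have Psi_nz: "Psi M \<tau> R k \<noteq> 0" if "k \<in> LMtau M \<tau>" for k
    using Psi_is_rank[OF inj] R that by (simp add: Rpsi_def)
  show "order_kept M (LMtau M \<tau>) \<tau> x"
    unfolding order_kept_def
  proof (intro ballI impI)
    fix k k' assume k: "k \<in> LMtau M \<tau>" and k': "k' \<in> LMtau M \<tau>"
      and lt: "ipr M k \<tau> < ipr M k' \<tau>"
    have "Psi M \<tau> R k < Psi M \<tau> R k'"
      using Psi_strict_mono[OF finite_LMtau[OF tpos] _ _ lt] Psi_nz k k' by auto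
    then show "ipr M k x < ipr M k' x"
      using Psi_reflects_order[of M x R k k'] LL same Psi_nz k k' finite_LMtau[OF tpos] by simp
  qed
  show "outside_late M (LMtau M \<tau>) x"
    using LL by (auto simp: outside_late_def LMtau_iff)
qed

text \<open>Conversely, (i) and (ii) give the same admissible set and distinct arrival times
  in the same order, so for every \<open>R' \<in> \<R>\<^sub>\<psi>\<close> the enumeration is the same rank function.\<close>
lemma conditions_imp_Upsi:
  assumes inj: "inj_on (\<lambda>k. ipr M k \<tau>) (LMtau M \<tau>)"
    and R: "R \<in> Rpsi M (LMtau M \<tau>)" and xpos: "x \<in> pos_vecs M"
    and ord: "order_kept M (LMtau M \<tau>) \<tau> x" and late: "outside_late M (LMtau M \<tau>) x"
  shows "x \<in> Upsi M (LMtau M \<tau>) (Psi M \<tau> R)"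
proof -
  let ?L = "LMtau M \<tau>"
  have LL: "LMtau M x = ?L" by (rule LMtau_preserved[OF inj ord late])
  have injx: "inj_on (\<lambda>k. ipr M k x) (LMtau M x)"
    using order_kept_distinct_times[OF inj ord] LL by simp
  have "Psi M x R' k = Psi M \<tau> R k" if R': "R' \<in> Rpsi M ?L" and k: "k \<in> ?L" for R' k
  proof -
    have "Psi M x R' k = 1 + card {j \<in> ?L. ipr M j x < ipr M k x}"
      using Psi_is_rank[OF injx] R' k LL by (simp add: Rpsi_def)
    also have "{j \<in> ?L. ipr M j x < ipr M k x} = {j \<in> ?L. ipr M j \<tau> < ipr M k \<tau>}"
      using order_kept_less_iff[OF inj ord _ k] by auto
    also have "1 + card \<dots> = Psi M \<tau> R k"
      using Psi_is_rank[OF inj] R k by (simp add: Rpsi_def)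
    finally show ?thesis .
  qed
  then show ?thesis using xpos LL by (simp add: Upsi_def)
qed

theorem Upsi_characterisation:
  assumes tpos: "\<tau> \<in> pos_vecs M" and inj: "inj_on (\<lambda>k. ipr M k \<tau>) (LMtau M \<tau>)"
    and R: "R \<in> Rpsi M (LMtau M \<tau>)"
  shows "Upsi M (LMtau M \<tau>) (Psi M \<tau> R)
    = {x \<in> pos_vecs M. order_kept M (LMtau M \<tau>) \<tau> x \<and> outside_late M (LMtau M \<tau>) x}"
  using Upsi_imp_conditions[OF tpos inj R] conditions_imp_Upsi[OF inj R]
  by (auto simp: Upsi_def)

section \<open>Convexity\<close>

lemma ipr_convex_comb:
  "ipr M k (\<lambda>n. (1 - s) * x n + s * y n) = (1 - s) * ipr M k x + s * ipr M k y"
  unfolding ipr_def sum_distrib_left sum.distrib[symmetric]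
  by (intro sum.cong) (auto simp: algebra_simps)

lemma convex_comb_less:
  fixes a b c d s :: real
  assumes "a < b" "c < d" "0 \<le> s" "s \<le> 1"
  shows "(1 - s) * a + s * c < (1 - s) * b + s * d"
proof (cases "s = 0")
  case False
  then have "s * c < s * d" using assms by simp
  moreover have "(1 - s) * a \<le> (1 - s) * b" using assms by (intro mult_left_mono) auto
  ultimately show ?thesis by linarith
qed (use assms in simp)

text \<open>The set cut out by (i) and (ii) is an intersection of open half-spaces.\<close>
lemma convex_order_late:
  "convex_coords {x \<in> pos_vecs M. order_kept M L \<tau> x \<and> outside_late M L x}"
  unfolding convex_coords_def
proof (intro ballI allI impI)
  fix x y and s :: real
  assume x: "x \<in> {x \<in> pos_vecs M. order_kept M L \<tau> x \<and> outside_late M L x}"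
    and y: "y \<in> {x \<in> pos_vecs M. order_kept M L \<tau> x \<and> outside_late M L x}"
    and s: "0 \<le> s \<and> s \<le> 1"
  let ?z = "\<lambda>n. (1 - s) * x n + s * y n"
  have "0 < ?z n" if "n \<le> M" for n
    using convex_comb_less[of 0 "x n" 0 "y n" s] x y s that by (simp add: pos_vecs_def)
  then have "?z \<in> pos_vecs M"
    using x y by (simp add: pos_vecs_def Rsp_def)
  moreover have "order_kept M L \<tau> ?z"
    using x y s unfolding order_kept_def ipr_convex_comb by (auto intro!: convex_comb_less)
  moreover have "outside_late M L ?z"
    using x y s unfolding outside_late_def ipr_convex_comb by (auto intro!: convex_comb_less)
  ultimately show "?z \<in> {x \<in> pos_vecs M. order_kept M L \<tau> x \<and> outside_late M L x}" by simp
qed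

section \<open>Openness\<close>

lemma open_Collect_finite_ball:
  "finite I \<Longrightarrow> (\<And>i. i \<in> I \<Longrightarrow> open {x. Q i x}) \<Longrightarrow> open {x. \<forall>i\<in>I. Q i x}"
  using open_INT[of I "\<lambda>i. {x. Q i x}"] by (simp add: Collect_ball_eq)

lemma continuous_ipr: "continuous_on UNIV (\<lambda>x. ipr M k x)"
  unfolding ipr_def by (intro continuous_intros) simp

lemma continuous_ampl: "continuous_on UNIV (\<lambda>x. ampl M x k)"
  unfolding ampl_def by (intro continuous_intros) simp_all

lemma open_order_kept:
  assumes "finite L"
  shows "open {x. order_kept M L \<tau> x}"
proof -
  let ?P = "{p \<in> L \<times> L. ipr M (fst p) \<tau> < ipr M (snd p) \<tau>}"
  have "open {x. \<forall>p\<in>?P. ipr M (fst p) x < ipr M (snd p) x}"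
    by (intro open_Collect_finite_ball open_Collect_less continuous_ipr) (use assms in auto)
  moreover have "{x. \<forall>p\<in>?P. ipr M (fst p) x < ipr M (snd p) x} = {x. order_kept M L \<tau> x}"
    by (auto simp: order_kept_def)
  ultimately show ?thesis by simp
qed

lemma ipr_half_bound:
  assumes "\<forall>n\<le>M. x0 n / 2 < x n"
  shows "ipr M k x0 / 2 \<le> ipr M k x"
proof -
  have "ipr M k x0 / 2 = (\<Sum>n\<le>M. real (k n) * (x0 n / 2))"
    unfolding ipr_def by (simp add: sum_divide_distrib)
  also have "\<dots> \<le> ipr M k x"
    unfolding ipr_def using assms by (intro sum_mono mult_left_mono) auto
  finally show ?thesis .
qed

text \<open>Condition (ii) together with positivity is open in \<open>\<real>\<^sup>M\<^sup>+\<^sup>1\<close>: near \<open>x\<^sub>0\<close>, only the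
  finitely many \<open>k\<close> with \<open>\<langle>k,x\<^sub>0\<rangle> \<le> 4\<langle>\<one>,x\<^sub>0\<rangle>\<close> can compete with the threshold.\<close>
lemma openin_outside_late:
  "openin (top_of_set (Rsp M)) {x \<in> pos_vecs M. outside_late M L x}"
proof (subst openin_subopen, intro ballI)
  fix x0 assume "x0 \<in> {x \<in> pos_vecs M. outside_late M L x}"
  then have x0: "x0 \<in> pos_vecs M" and late0: "outside_late M L x0" by auto
  define C where "C = ipr M (ones M) x0"
  have "C > 0"
    using ipr_ge_summand[OF x0, of 0 "ones M"] x0 by (auto simp: C_def ones_def pos_vecs_def)
  define F where "F = {k \<in> Nsp M. ipr M k x0 \<le> 4 * C}"
  have "finite F" unfolding F_def by (rule finite_sublevel[OF x0])
  then have finF: "finite ((F \<inter> LM M) - L)" by simp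
  define V where "V = {x. \<forall>n\<in>{..M}. x0 n / 2 < x n} \<inter> {x. ipr M (ones M) x < 2 * C}
      \<inter> {x. \<forall>k\<in>(F \<inter> LM M) - L. ipr M (ones M) x < ipr M k x}"
  have "open {x::nat\<Rightarrow>real. \<forall>n\<in>{..M}. x0 n / 2 < x n}"
    by (intro open_Collect_finite_ball open_Collect_less continuous_on_const) simp_all
  moreover have "open {x. ipr M (ones M) x < 2 * C}"
    by (intro open_Collect_less continuous_ipr continuous_on_const)
  moreover have "open {x. \<forall>k\<in>(F \<inter> LM M) - L. ipr M (ones M) x < ipr M k x}"
    by (intro open_Collect_finite_ball[OF finF] open_Collect_less continuous_ipr)
  ultimately have "open V" unfolding V_def by (intro open_Int)
  moreover have "x0 \<in> V"
  proof -
    have "x0 n / 2 < x0 n" if "n \<le> M" for n using x0 that by (simp add: pos_vecs_def)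
    moreover have "ipr M (ones M) x0 < 2 * C" using \<open>C > 0\<close> by (simp add: C_def)
    ultimately show ?thesis using late0 by (simp add: V_def outside_late_def)
  qed
  moreover have "Rsp M \<inter> V \<subseteq> {x \<in> pos_vecs M. outside_late M L x}"
  proof
    fix x assume x: "x \<in> Rsp M \<inter> V"
    then have half: "\<forall>n\<le>M. x0 n / 2 < x n" by (simp add: V_def)
    have "0 < x n" if n: "n \<le> M" for n
      using half n x0 by (fastforce simp: pos_vecs_def)
    then have "x \<in> pos_vecs M" using x by (simp add: pos_vecs_def)
    moreover have "ipr M (ones M) x < ipr M k x" if k: "k \<in> LM M - L" for k
    proof (cases "k \<in> F")
      case False
      then have "4 * C < ipr M k x0" using k by (auto simp: F_def LM_def)
      moreover have "ipr M (ones M) x < 2 * C" using x by (simp add: V_def)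
      ultimately show ?thesis using ipr_half_bound[OF half, of k] by linarith
    qed (use x k in \<open>simp add: V_def\<close>)
    ultimately show "x \<in> {x \<in> pos_vecs M. outside_late M L x}"
      by (simp add: outside_late_def)
  qed
  ultimately show "\<exists>T. openin (top_of_set (Rsp M)) T \<and> x0 \<in> T
      \<and> T \<subseteq> {x \<in> pos_vecs M. outside_late M L x}"
    using x0 by (intro exI[of _ "Rsp M \<inter> V"]) (auto simp: pos_vecs_def)
qed

text \<open>\<open>\<R>\<^sub>\<psi>\<close> avoids the zero sets of finitely many continuous amplitudes.\<close>
lemma openin_Rpsi:
  assumes "finite L"
  shows "openin (top_of_set (Rsp M)) (Rpsi M L)"
proof -
  have "open {x::nat\<Rightarrow>real. \<forall>n\<in>{..M}. -1 < x n \<and> x n < 1}"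
    by (intro open_Collect_finite_ball open_Collect_conj open_Collect_less continuous_on_const)
       simp_all
  moreover have "open {x. \<forall>k\<in>L. ampl M x k \<noteq> 0}"
    by (intro open_Collect_finite_ball assms open_Collect_neq continuous_ampl continuous_on_const)
  moreover have "Rpsi M L
      = Rsp M \<inter> ({x. \<forall>n\<in>{..M}. -1 < x n \<and> x n < 1} \<inter> {x. \<forall>k\<in>L. ampl M x k \<noteq> 0})"
    by (auto simp: Rpsi_def refl_vecs_def)
  ultimately show ?thesis by (simp add: openin_open_Int open_Int)
qed

theorem proposition4p2:
  fixes M :: nat and \<tau> R :: "nat \<Rightarrow> real"
  assumes "M \<ge> 1"
    and "generic M \<tau> R"
  shows "convex_coords (Upsi M (LMtau M \<tau>) (Psi M \<tau> R))
    \<and> openin (top_of_set (Rsp M)) (Upsi M (LMtau M \<tau>) (Psi M \<tau> R))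
    \<and> \<tau> \<in> Upsi M (LMtau M \<tau>) (Psi M \<tau> R)
    \<and> openin (top_of_set (Rsp M)) (Rpsi M (LMtau M \<tau>))
    \<and> R \<in> Rpsi M (LMtau M \<tau>)"
proof -
  let ?L = "LMtau M \<tau>"
  have tpos: "\<tau> \<in> pos_vecs M" using assms(2) by (simp add: generic_def)
  have finL: "finite ?L" by (rule finite_LMtau[OF tpos])
  have Rin: "R \<in> Rpsi M ?L" by (rule generic_in_Rpsi[OF assms(2)])
  have char: "Upsi M ?L (Psi M \<tau> R)
      = {x \<in> pos_vecs M. order_kept M ?L \<tau> x \<and> outside_late M ?L x}"
    by (rule Upsi_characterisation[OF tpos generic_distinct_times[OF assms(2)] Rin])
  have "convex_coords (Upsi M ?L (Psi M \<tau> R))"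
    unfolding char by (rule convex_order_late)
  moreover have "openin (top_of_set (Rsp M)) (Upsi M ?L (Psi M \<tau> R))"
  proof -
    have "Upsi M ?L (Psi M \<tau> R)
        = {x \<in> pos_vecs M. outside_late M ?L x} \<inter> {x. order_kept M ?L \<tau> x}"
      unfolding char by auto
    then show ?thesis by (simp add: openin_Int_open openin_outside_late open_order_kept finL)
  qed
  moreover have "\<tau> \<in> Upsi M ?L (Psi M \<tau> R)"
    unfolding char using tpos by (auto simp: order_kept_def outside_late_def LMtau_iff)
  ultimately show ?thesis using openin_Rpsi[OF finL] Rin by blast
qed

end
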